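(* There is an absolute constant $C$ such that the following holds. Let $m\geq2$ be a divisor of $n$ and let $X_{n/m}$ be the set of unordered partitions of $\{1,\dots,n\}$ into $n/m$ cells each of size $m$, with the natural action of $S_n$. If $\pi\in S_n$ has $c$ cycles, then the number of elements of $X_{n/m}$ fixed by $\pi$ is at most $m^{Cn}c^{(1-1/m)c}$. *)

theory Defs
  imports Complex_Main "HOL-Library.Disjoint_Sets" "HOL-Combinatorics.Permutations" "HOL-Combinatorics.Orbits"
begin

definition uniform_partitions :: "nat \<Rightarrow> nat \<Rightarrow> nat set set set" where
  "uniform_partitions n m =
     {P. partition_on {1..n} P \<and> (\<forall>B\<in>P. card B = m) \<and> card P = n div m}"

definition perm_act_partition :: "(nat \<Rightarrow> nat) \<Rightarrow> nat set set \<Rightarrow> nat set set" where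
  "perm_act_partition p P = (\<lambda>B. p ` B) ` P"

definition num_cycles :: "(nat \<Rightarrow> nat) \<Rightarrow> nat \<Rightarrow> nat" where
  "num_cycles p n = card ((\<lambda>x. orbit p x) ` {1..n})"

end

(* Let P be a partition of S into cells of size at most m that is invariant under the
   permutation p.  The cells in the <p>-orbit of a cell B cover exactly the cycles of p that
   meet B; call this union the cluster of B.  The clusters therefore group the c cycles of p
   into classes of at most m cycles each.  P is determined by two data: the retraction of the
   set of cycles that sends each cycle to the cycle through the least element of its cluster
   (its image has at least c/m points), and the set of elements lying in the cells of these
   least elements, because every other cell of a cluster is the image of that cell under a
   power of p.  A retraction of a c-set with an image of t >= c/m points is one of at most
   2^c t^(c-t) <= 2^c c^((1-1/m)c) maps, and there are at most 2^n choices for the set, so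
   there are at most 4^n c^((1-1/m)c) <= m^(2n) c^((1-1/m)c) invariant partitions. *)

theory Submission
  imports Defs
begin

definition retractions :: "'a set \<Rightarrow> ('a \<Rightarrow> 'a) set" where
  "retractions A = {f \<in> A \<rightarrow>\<^sub>E A. \<forall>x\<in>A. f (f x) = f x}"

lemma retractions_image_subset: "f \<in> retractions A \<Longrightarrow> f ` A \<subseteq> A"
  by (auto simp: retractions_def)

lemma retraction_fixes_image: "f \<in> retractions A \<Longrightarrow> y \<in> f ` A \<Longrightarrow> f y = y"
  by (auto simp: retractions_def)

lemma finite_retractions: "finite A \<Longrightarrow> finite (retractions A)"
  unfolding retractions_def by (rule finite_subset[of _ "A \<rightarrow>\<^sub>E A"]) (auto intro: finite_PiE)

lemma card_retractions_onto_le: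
  assumes "finite A" "T \<subseteq> A"
  shows "card {f \<in> retractions A. f ` A = T} \<le> card T ^ card (A - T)"
proof -
  let ?R = "{f \<in> retractions A. f ` A = T}"
  have "inj_on (\<lambda>f. restrict f (A - T)) ?R"
  proof (rule inj_onI)
    fix f g assume f: "f \<in> ?R" and g: "g \<in> ?R" and eq: "restrict f (A - T) = restrict g (A - T)"
    have "f x = g x" for x
    proof -
      consider "x \<in> A - T" | "x \<in> T" | "x \<notin> A"
        using assms(2) by blast
      then show ?thesis
      proof cases
        case 1
        then show ?thesis using fun_cong[OF eq, of x] by simp
      next
        case 2
        then show ?thesis
          using f g retraction_fixes_image[of f A x] retraction_fixes_image[of g A x] by simp
      next
        case 3
        have "f \<in> A \<rightarrow>\<^sub>E A" "g \<in> A \<rightarrow>\<^sub>E A"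
          using f g by (simp_all add: retractions_def)
        with 3 show ?thesis by (metis PiE_arb)
      qed
    qed
    then show "f = g" ..
  qed
  moreover have "(\<lambda>f. restrict f (A - T)) ` ?R \<subseteq> (A - T) \<rightarrow>\<^sub>E T"
    by (intro image_subsetI) (simp only: restrict_PiE_iff, blast)
  moreover have "finite ((A - T) \<rightarrow>\<^sub>E T)"
    using assms by (simp add: finite_PiE finite_subset)
  ultimately have "card ?R \<le> card ((A - T) \<rightarrow>\<^sub>E T)"
    by (rule card_inj_on_le)
  also have "\<dots> = card T ^ card (A - T)"
    using assms(1) by (simp add: card_PiE)
  finally show ?thesis .
qed

lemma power_diff_le_powr:
  assumes "t \<le> c" "c \<le> k * t" "1 \<le> c"
  shows "real t ^ (c - t) \<le> real c powr ((1 - 1 / real k) * real c)"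
proof -
  have "k \<ge> 1" using assms by (cases k) auto
  have "real t ^ (c - t) \<le> real c ^ (c - t)"
    using assms(1) by (intro power_mono) auto
  also have "\<dots> = real c powr real (c - t)"
    using assms(3) by (simp add: powr_realpow)
  also have "\<dots> \<le> real c powr ((1 - 1 / real k) * real c)"
  proof (rule powr_mono)
    have "real c \<le> real k * real t"
      using assms(2) by (metis of_nat_le_iff of_nat_mult)
    then have "real c / real k \<le> real t"
      using \<open>k \<ge> 1\<close> by (simp add: divide_le_eq mult.commute)
    then show "real (c - t) \<le> (1 - 1 / real k) * real c"
      using assms(1) by (simp add: of_nat_diff algebra_simps)
  qed (use assms(3) in auto)
  finally show ?thesis .
qed

lemma card_retractions_large_image_le:
  assumes "finite A" "A \<noteq> {}"
  shows "real (card {f \<in> retractions A. card A \<le> k * card (f ` A)})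
           \<le> 2 ^ card A * real (card A) powr ((1 - 1 / real k) * real (card A))"
proof -
  let ?F = "{f \<in> retractions A. card A \<le> k * card (f ` A)}"
  let ?K = "real (card A) powr ((1 - 1 / real k) * real (card A))"
  let ?I = "{T. T \<subseteq> A \<and> card A \<le> k * card T}"
  have fin_I: "finite ?I"
    by (rule finite_subset[of _ "Pow A"]) (use assms(1) in auto)
  have "?F = (\<Union>T\<in>?I. {f \<in> retractions A. f ` A = T})"
    using retractions_image_subset by blast
  then have "card ?F \<le> (\<Sum>T\<in>?I. card {f \<in> retractions A. f ` A = T})"
    using fin_I by (simp add: card_UN_le)
  also have "\<dots> \<le> (\<Sum>T\<in>?I. card T ^ card (A - T))"
    using assms(1) by (intro sum_mono card_retractions_onto_le) auto
  finally have "real (card ?F) \<le> real (\<Sum>T\<in>?I. card T ^ card (A - T))"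
    by (simp only: of_nat_le_iff)
  also have "\<dots> = (\<Sum>T\<in>?I. real (card T) ^ card (A - T))"
    by simp
  also have "\<dots> \<le> (\<Sum>T\<in>?I. ?K)"
  proof (rule sum_mono)
    fix T assume T: "T \<in> ?I"
    then have "T \<subseteq> A" by simp
    then have "finite T"
      using assms(1) by (rule finite_subset)
    with \<open>T \<subseteq> A\<close> have "card T \<le> card A" and card_diff: "card (A - T) = card A - card T"
      using assms(1) by (simp_all add: card_mono card_Diff_subset)
    moreover have "1 \<le> card A"
      using assms by (simp add: Suc_le_eq card_gt_0_iff)
    ultimately show "real (card T) ^ card (A - T) \<le> ?K"
      unfolding card_diff using T by (intro power_diff_le_powr) auto
  qed
  also have "\<dots> \<le> 2 ^ card A * ?K"
  proof -
    have "card ?I \<le> card (Pow A)"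
      using assms(1) by (intro card_mono) auto
    then have "real (card ?I) \<le> 2 ^ card A"
      using assms(1) by (simp add: card_Pow flip: of_nat_le_iff)
    then show ?thesis by (simp add: mult_right_mono)
  qed
  finally show ?thesis .
qed

lemma card_le_mult_card_image:
  assumes "finite A" "\<And>y. y \<in> f ` A \<Longrightarrow> card {x \<in> A. f x = y} \<le> k"
  shows "card A \<le> k * card (f ` A)"
proof -
  have "A = (\<Union>y\<in>f ` A. {x \<in> A. f x = y})" by blast
  then have "card A \<le> (\<Sum>y\<in>f ` A. card {x \<in> A. f x = y})"
    using assms(1) by (metis card_UN_le finite_imageI)
  also have "\<dots> \<le> k * card (f ` A)"
    using sum_bounded_above[of "f ` A" _ k] assms(2) by (simp add: mult.commute)
  finally show ?thesis .
qed

definition cell_of :: "'a set set \<Rightarrow> 'a \<Rightarrow> 'a set" where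
  "cell_of P x = (THE B. B \<in> P \<and> x \<in> B)"

definition cluster_of :: "('a \<Rightarrow> 'a) \<Rightarrow> 'a set set \<Rightarrow> 'a \<Rightarrow> 'a set" where
  "cluster_of p P x = \<Union> (orbit p ` cell_of P x)"

definition leader_of :: "('a::linorder \<Rightarrow> 'a) \<Rightarrow> 'a set set \<Rightarrow> 'a \<Rightarrow> 'a" where
  "leader_of p P x = Min (cluster_of p P x)"

text \<open>Any element of the cycle \<open>Z\<close> could replace \<open>Min Z\<close>: all of them lie in the same cluster.\<close>

definition cycle_map ::
    "('a::linorder \<Rightarrow> 'a) \<Rightarrow> 'a set set \<Rightarrow> 'a set \<Rightarrow> 'a set \<Rightarrow> 'a set" where
  "cycle_map p P S = (\<lambda>Z\<in>orbit p ` S. orbit p (leader_of p P (Min Z)))"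

definition leader_cells ::
    "('a::linorder \<Rightarrow> 'a) \<Rightarrow> 'a set set \<Rightarrow> 'a set \<Rightarrow> 'a set" where
  "leader_cells p P S = (\<Union>x\<in>S. cell_of P (leader_of p P x))"

locale invariant_partition =
  fixes S :: "'a::linorder set" and p :: "'a \<Rightarrow> 'a" and P :: "'a set set"
  assumes finite: "finite S"
    and permutes: "p permutes S"
    and partition: "partition_on S P"
    and invariant: "\<And>B. B \<in> P \<Longrightarrow> p ` B \<in> P"
begin

abbreviation "cell \<equiv> cell_of P"
abbreviation "cluster \<equiv> cluster_of p P"
abbreviation "leader \<equiv> leader_of p P"

lemma is_permutation: "permutation p"
  using permutes finite permutation_permutes by blast

lemma orbit_funpow: "orbit p ((p ^^ i) x) = orbit p x"
  by (rule orbit_cyclic_eq3[OF cyclic_on_orbit'[OF is_permutation]])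
    (intro funpow_in_orbit permutation_self_in_orbit[OF is_permutation])

lemma cell_eqI:
  assumes "B \<in> P" "x \<in> B"
  shows "cell x = B"
  unfolding cell_of_def
proof (rule the_equality)
  show "B \<in> P \<and> x \<in> B" using assms ..
  fix C assume "C \<in> P \<and> x \<in> C"
  then show "C = B"
    using assms disjointD[OF partition_onD2[OF partition], of C B] by blast
qed

lemma cell_in: "x \<in> S \<Longrightarrow> cell x \<in> P"
  and in_cell: "x \<in> S \<Longrightarrow> x \<in> cell x"
proof -
  assume "x \<in> S"
  then obtain B where "B \<in> P" "x \<in> B"
    using partition_onD1[OF partition] by blast
  then show "cell x \<in> P" "x \<in> cell x"
    using cell_eqI by simp_all
qed

lemma cell_subset: "x \<in> S \<Longrightarrow> cell x \<subseteq> S"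
  using partition_onD1[OF partition] cell_in by (simp add: Union_upper)

lemma funpow_image_cell: "B \<in> P \<Longrightarrow> (p ^^ i) ` B \<in> P"
proof (induction i)
  case (Suc i)
  have "(p ^^ Suc i) ` B = p ` (p ^^ i) ` B" by (simp add: image_comp)
  then show ?case using Suc invariant by simp
qed simp

lemma cell_funpow: "x \<in> S \<Longrightarrow> cell ((p ^^ i) x) = (p ^^ i) ` cell x"
  by (rule cell_eqI) (simp_all add: funpow_image_cell cell_in in_cell)

lemma partition_eq_image_cell: "P = cell ` S"
proof (intro equalityI subsetI)
  fix B assume B: "B \<in> P"
  then obtain x where "x \<in> B"
    using partition_onD3[OF partition] by (metis all_not_in_conv)
  then show "B \<in> cell ` S"
    using B cell_eqI partition_onD1[OF partition] by blast
qed (use cell_in in blast)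

lemma cell_funpow_of_mem:
  assumes "y \<in> S" "w \<in> cell y"
  shows "cell ((p ^^ i) w) = (p ^^ i) ` cell y"
proof -
  have "w \<in> S" using assms cell_subset by blast
  moreover have "cell w = cell y" using assms cell_in cell_eqI by blast
  ultimately show ?thesis using cell_funpow by simp
qed

lemma orbit_subset_cluster: "x \<in> S \<Longrightarrow> orbit p x \<subseteq> cluster x"
  unfolding cluster_of_def using in_cell by blast

lemma in_cluster: "x \<in> S \<Longrightarrow> x \<in> cluster x"
  using orbit_subset_cluster permutation_self_in_orbit[OF is_permutation] by blast

lemma cell_subset_cluster: "x \<in> S \<Longrightarrow> cell x \<subseteq> cluster x"
  unfolding cluster_of_def using permutation_self_in_orbit[OF is_permutation] by blast

lemma cluster_subset: "x \<in> S \<Longrightarrow> cluster x \<subseteq> S"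
  unfolding cluster_of_def using cell_subset permutes_orbit_subset[OF permutes] by blast

lemma finite_cluster: "x \<in> S \<Longrightarrow> finite (cluster x)"
  using cluster_subset finite by (rule finite_subset)

lemma cluster_eq:
  assumes "x \<in> S" "y \<in> cluster x"
  shows "cluster y = cluster x"
proof -
  obtain w where w: "w \<in> cell x" "y \<in> orbit p w"
    using assms(2) unfolding cluster_of_def by blast
  then obtain i where y: "y = (p ^^ i) w"
    using orbit_altdef_permutation[OF is_permutation] by blast
  have "cluster y = \<Union> (orbit p ` (p ^^ i) ` cell x)"
    by (simp add: cluster_of_def y cell_funpow_of_mem[OF assms(1) w(1)])
  also have "\<dots> = cluster x"
    unfolding cluster_of_def image_comp by (simp add: o_def orbit_funpow)
  finally show ?thesis .
qed

lemma leader_in_cluster: "x \<in> S \<Longrightarrow> leader x \<in> cluster x"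
  unfolding leader_of_def using finite_cluster in_cluster by (blast intro: Min_in)

lemma leader_in: "x \<in> S \<Longrightarrow> leader x \<in> S"
  using leader_in_cluster cluster_subset by blast

lemma cluster_leader: "x \<in> S \<Longrightarrow> cluster (leader x) = cluster x"
  using cluster_eq leader_in_cluster by blast

lemma leader_leader: "x \<in> S \<Longrightarrow> leader (leader x) = leader x"
  by (metis cluster_leader leader_of_def)

lemma cycle_map_orbit: "x \<in> S \<Longrightarrow> cycle_map p P S (orbit p x) = orbit p (leader x)"
proof -
  assume x: "x \<in> S"
  have "Min (orbit p x) \<in> orbit p x"
    using permutation_self_in_orbit[OF is_permutation]
    by (intro Min_in finite_orbit orbit_nonempty)
  then have "leader (Min (orbit p x)) = leader x"
    unfolding leader_of_def using cluster_eq[OF x] orbit_subset_cluster[OF x] by auto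
  then show ?thesis
    unfolding cycle_map_def using x by simp
qed

lemma orbit_leader_eq_iff:
  assumes "x \<in> S" "y \<in> S"
  shows "orbit p (leader x) = orbit p (leader y) \<longleftrightarrow> cluster x = cluster y"
proof
  assume "orbit p (leader x) = orbit p (leader y)"
  then have "leader y \<in> cluster (leader x)"
    using orbit_subset_cluster[OF leader_in[OF assms(1)]] permutation_self_in_orbit[OF is_permutation]
    by blast
  then have "cluster (leader y) = cluster x"
    using cluster_eq leader_in cluster_leader assms(1) by metis
  then show "cluster x = cluster y"
    using cluster_leader[OF assms(2)] by simp
qed (simp add: leader_of_def)

lemma cluster_eq_cycle_map_fibre:
  assumes "x \<in> S"
  shows "cluster x = {y \<in> S. cycle_map p P S (orbit p y) = cycle_map p P S (orbit p x)}"
proof (intro equalityI subsetI)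
  fix y assume "y \<in> cluster x"
  then have y: "y \<in> S" and "cluster y = cluster x"
    using assms cluster_subset cluster_eq by blast+
  then have "orbit p (leader y) = orbit p (leader x)"
    using orbit_leader_eq_iff[OF y assms] by blast
  then show "y \<in> {y \<in> S. cycle_map p P S (orbit p y) = cycle_map p P S (orbit p x)}"
    using y assms by (simp add: cycle_map_orbit)
next
  fix y assume "y \<in> {y \<in> S. cycle_map p P S (orbit p y) = cycle_map p P S (orbit p x)}"
  then have y: "y \<in> S" and "orbit p (leader y) = orbit p (leader x)"
    using assms cycle_map_orbit by auto
  then have "cluster y = cluster x"
    using orbit_leader_eq_iff[OF y assms] by blast
  then show "y \<in> cluster x"
    using in_cluster[OF y] by simp
qed

lemma leader_cells_subset: "leader_cells p P S \<subseteq> S"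
  unfolding leader_cells_def using cell_subset leader_in by blast

lemma leader_cells_Int_cluster:
  assumes "x \<in> S"
  shows "leader_cells p P S \<inter> cluster x = cell (leader x)"
proof (intro equalityI subsetI)
  fix z assume z: "z \<in> leader_cells p P S \<inter> cluster x"
  then obtain y where y: "y \<in> S" "z \<in> cell (leader y)"
    unfolding leader_cells_def by blast
  then have "z \<in> cluster y"
    using cell_subset_cluster[OF leader_in] cluster_leader by blast
  then have "cluster y = cluster x"
    using z cluster_eq assms y(1) by (metis IntD2)
  then show "z \<in> cell (leader x)"
    using y(2) by (simp add: leader_of_def)
next
  fix z assume "z \<in> cell (leader x)"
  then show "z \<in> leader_cells p P S \<inter> cluster x"
    unfolding leader_cells_def
    using assms cell_subset_cluster[OF leader_in] cluster_leader by blast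
qed

lemma cycle_map_in_retractions: "cycle_map p P S \<in> retractions (orbit p ` S)"
  unfolding retractions_def
proof (intro CollectI conjI ballI)
  show "cycle_map p P S \<in> orbit p ` S \<rightarrow>\<^sub>E orbit p ` S"
  proof (rule PiE_I)
    fix Z assume "Z \<in> orbit p ` S"
    then obtain y where "y \<in> S" "Z = orbit p y" by blast
    then show "cycle_map p P S Z \<in> orbit p ` S"
      using cycle_map_orbit leader_in by simp
  qed (simp add: cycle_map_def)
  fix Z assume "Z \<in> orbit p ` S"
  then obtain y where "y \<in> S" "Z = orbit p y" by blast
  then show "cycle_map p P S (cycle_map p P S Z) = cycle_map p P S Z"
    using cycle_map_orbit leader_in leader_leader by simp
qed

lemma card_cycle_map_fibre_le:
  assumes "x \<in> S"
  shows "card {Z \<in> orbit p ` S. cycle_map p P S Z = cycle_map p P S (orbit p x)} \<le> card (cell x)"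
proof -
  have "{Z \<in> orbit p ` S. cycle_map p P S Z = cycle_map p P S (orbit p x)} \<subseteq> orbit p ` cell x"
  proof safe
    fix y assume "y \<in> S" "cycle_map p P S (orbit p y) = cycle_map p P S (orbit p x)"
    then have "y \<in> cluster x"
      using cluster_eq_cycle_map_fibre[OF assms] by blast
    then obtain w where "w \<in> cell x" "y \<in> orbit p w"
      unfolding cluster_of_def by blast
    then show "orbit p y \<in> orbit p ` cell x"
      using orbit_cyclic_eq3[OF cyclic_on_orbit'[OF is_permutation]] by blast
  qed
  then have "card {Z \<in> orbit p ` S. cycle_map p P S Z = cycle_map p P S (orbit p x)} \<le> card (orbit p ` cell x)"
    using finite cell_subset[OF assms] by (intro card_mono) (auto intro: finite_subset)
  also have "\<dots> \<le> card (cell x)"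
    using finite cell_subset[OF assms] by (intro card_image_le) (rule finite_subset)
  finally show ?thesis .
qed

lemma card_cycles_le_mult_card_clusters:
  assumes "\<And>B. B \<in> P \<Longrightarrow> card B \<le> m"
  shows "card (orbit p ` S) \<le> m * card (cycle_map p P S ` orbit p ` S)"
proof (rule card_le_mult_card_image)
  fix Y assume "Y \<in> cycle_map p P S ` orbit p ` S"
  then obtain x where "x \<in> S" "Y = cycle_map p P S (orbit p x)" by blast
  then show "card {Z \<in> orbit p ` S. cycle_map p P S Z = Y} \<le> m"
    using card_cycle_map_fibre_le assms cell_in le_trans by blast
qed (simp add: finite)

end

lemma invariant_partition_eqI:
  assumes P: "invariant_partition S p P" and Q: "invariant_partition S p Q"
    and cycle_map_eq: "cycle_map p P S = cycle_map p Q S"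
    and leader_cells_eq: "leader_cells p P S = leader_cells p Q S"
  shows "P = Q"
proof -
  interpret P: invariant_partition S p P by (fact P)
  interpret Q: invariant_partition S p Q by (fact Q)
  have cluster_eq: "P.cluster x = Q.cluster x" if "x \<in> S" for x
    using P.cluster_eq_cycle_map_fibre Q.cluster_eq_cycle_map_fibre cycle_map_eq that by simp
  have cell_eq: "cell_of P x = cell_of Q x" if x: "x \<in> S" for x
  proof -
    have leader_eq: "P.leader x = Q.leader x"
      using cluster_eq[OF x] by (simp add: leader_of_def)
    have leader_cell_eq: "cell_of P (P.leader x) = cell_of Q (P.leader x)"
      using P.leader_cells_Int_cluster[OF x] Q.leader_cells_Int_cluster[OF x]
      by (simp add: cluster_eq[OF x] leader_cells_eq leader_eq)
    have "x \<in> P.cluster (P.leader x)"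
      using P.cluster_leader P.in_cluster x by simp
    then obtain w where w: "w \<in> cell_of P (P.leader x)" "x \<in> orbit p w"
      unfolding cluster_of_def by blast
    then obtain i where "x = (p ^^ i) w"
      using orbit_altdef_permutation[OF P.is_permutation] by blast
    then have "cell_of P x = (p ^^ i) ` cell_of P (P.leader x)"
      and "cell_of Q x = (p ^^ i) ` cell_of Q (P.leader x)"
      using P.cell_funpow_of_mem[OF P.leader_in[OF x]] Q.cell_funpow_of_mem[OF P.leader_in[OF x]]
        w(1) leader_cell_eq by auto
    then show ?thesis
      using leader_cell_eq by simp
  qed
  have "P = cell_of P ` S" "Q = cell_of Q ` S"
    by (fact P.partition_eq_image_cell Q.partition_eq_image_cell)+
  then show ?thesis
    using cell_eq by (simp cong: image_cong)
qed

lemma card_invariant_partitions_le: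
  fixes S :: "'a::linorder set"
  assumes fin: "finite S" and ne: "S \<noteq> {}" and p: "p permutes S"
  defines "c \<equiv> card (orbit p ` S)"
  shows "real (card {P. partition_on S P \<and> (\<forall>B\<in>P. card B \<le> m) \<and> (\<forall>B\<in>P. p ` B \<in> P)})
           \<le> 4 ^ card S * real c powr ((1 - 1 / real m) * real c)"
proof -
  let ?X = "{P. partition_on S P \<and> (\<forall>B\<in>P. card B \<le> m) \<and> (\<forall>B\<in>P. p ` B \<in> P)}"
  let ?R = "{f \<in> retractions (orbit p ` S). card (orbit p ` S) \<le> m * card (f ` orbit p ` S)}"
  let ?K = "real c powr ((1 - 1 / real m) * real c)"
  have inv: "invariant_partition S p P" if "P \<in> ?X" for P
    using fin p that by unfold_locales auto
  have "inj_on (\<lambda>P. (cycle_map p P S, leader_cells p P S)) ?X"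
    by (rule inj_onI, rule invariant_partition_eqI[OF inv inv]) auto
  moreover have "(\<lambda>P. (cycle_map p P S, leader_cells p P S)) ` ?X \<subseteq> ?R \<times> Pow S"
  proof (rule image_subsetI)
    fix P assume P: "P \<in> ?X"
    then interpret invariant_partition S p P by (rule inv)
    have "card (orbit p ` S) \<le> m * card (cycle_map p P S ` orbit p ` S)"
      using P by (intro card_cycles_le_mult_card_clusters) auto
    then show "(cycle_map p P S, leader_cells p P S) \<in> ?R \<times> Pow S"
      using cycle_map_in_retractions leader_cells_subset by simp
  qed
  moreover have "finite (?R \<times> Pow S)"
    using finite_retractions[of "orbit p ` S"] fin by simp
  ultimately have "card ?X \<le> card (?R \<times> Pow S)"
    by (rule card_inj_on_le)
  then have "card ?X \<le> card ?R * 2 ^ card S"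
    using fin by (simp add: card_cartesian_product card_Pow)
  then have "real (card ?X) \<le> real (card ?R) * 2 ^ card S"
    using of_nat_mono[where 'a=real] by fastforce
  also have "\<dots> \<le> (2 ^ c * ?K) * 2 ^ card S"
    using card_retractions_large_image_le[of "orbit p ` S" m] fin ne unfolding c_def
    by (intro mult_right_mono) auto
  also have "\<dots> \<le> (2 ^ card S * ?K) * 2 ^ card S"
    using card_image_le[OF fin, of "orbit p"] unfolding c_def
    by (intro mult_right_mono power_increasing) auto
  also have "\<dots> = 4 ^ card S * ?K"
    by (simp add: power_mult_distrib[symmetric])
  finally show ?thesis .
qed

theorem lemma4p4:
  shows "\<exists>C::real. \<forall>n m :: nat. \<forall>p.
     n \<ge> 1 \<longrightarrow> m \<ge> 2 \<longrightarrow> m dvd n \<longrightarrow> p permutes {1..n} \<longrightarrow>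
     real (card {P \<in> uniform_partitions n m. perm_act_partition p P = P})
       \<le> real m powr (C * real n) *
         real (num_cycles p n) powr ((1 - 1 / real m) * real (num_cycles p n))"
proof (intro exI[of _ 2] allI impI)
  fix n m :: nat and p :: "nat \<Rightarrow> nat"
  assume n: "n \<ge> 1" and m: "m \<ge> 2" and "m dvd n" and p: "p permutes {1..n}"
  let ?K = "real (num_cycles p n) powr ((1 - 1 / real m) * real (num_cycles p n))"
  let ?Y = "{P. partition_on {1..n} P \<and> (\<forall>B\<in>P. card B \<le> m) \<and> (\<forall>B\<in>P. p ` B \<in> P)}"
  have "{P \<in> uniform_partitions n m. perm_act_partition p P = P} \<subseteq> ?Y"
    unfolding uniform_partitions_def perm_act_partition_def by auto
  moreover have "finite ?Y"
    by (rule finite_subset[OF _ finitely_many_partition_on[of "{1..n}"]]) auto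
  ultimately have "real (card {P \<in> uniform_partitions n m. perm_act_partition p P = P})
                     \<le> real (card ?Y)"
    by (simp add: card_mono)
  also have "\<dots> \<le> 4 ^ n * ?K"
    using card_invariant_partitions_le[of "{1..n}" p m] n p by (simp add: num_cycles_def)
  also have "\<dots> \<le> real m powr (2 * real n) * ?K"
  proof (rule mult_right_mono)
    have "(4::real) ^ n = 2 powr (2 * real n)"
      by (simp add: powr_realpow power_mult flip: powr_powr)
    also have "\<dots> \<le> real m powr (2 * real n)"
      using m by (intro powr_mono2) auto
    finally show "(4::real) ^ n \<le> real m powr (2 * real n)" .
  qed simp
  finally show "real (card {P \<in> uniform_partitions n m. perm_act_partition p P = P})
                  \<le> real m powr (2 * real n) * ?K" .
qed

end
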